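(* Let $(X,\mathscr{A},\mu)$ be a $\sigma$-finite measure space and $\phi$ a nonsingular transformation of $X$ such that $0<\mathsf{h}_\phi<\infty$ a.e. $[\mu]$. Suppose $P\colon X\times\mathfrak{B}(\mathbb{R}_+)\to[0,1]$ is an $\mathscr{A}$-measurable family of probability measures satisfying $\mathsf{E}(P(\cdot,\sigma))(x)=\dfrac{\int_\sigma t\,P(\phi(x),\mathrm{d}t)}{\mathsf{h}_\phi(\phi(x))}$ for $\mu$-a.e. $x\in X$, for every $\sigma\in\mathfrak{B}(\mathbb{R}_+)$. Let $n\in\mathbb{N}$ be such that $\mathsf{h}_{\phi^n}<\infty$ a.e. $[\mu]$. Then for every $j=1,\dots,n$: $0<\mathsf{h}_{\phi^j}<\infty$ a.e. $[\mu]$, and $\mathsf{E}_j(P_j(\cdot,\sigma))(x)=\dfrac{\int_\sigma t\,P_j(\phi^j(x),\mathrm{d}t)}{\mathsf{h}_{\phi^j}(\phi^j(x))}$ for $\mu$-a.e. $x\in X$, for every $\sigma\in\mathfrak{B}(\mathbb{R}_+)$, where $P_j\colon X\times\mathfrak{B}(\mathbb{R}_+)\to[0,1]$ is the $\mathscr{A}$-measurable family of probability measures $P_j(x,\sigma)=P(x,\eta_j^{-1}(\sigma))$ with $\eta_j\colon\mathbb{R}_+\ni t\mapsto t^j\in\mathbb{R}_+$, and $\mathsf{E}_j$ denotes conditional expectation with respect to $(\phi^j)^{-1}(\mathscr{A})$.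
   Context: $\mathbb{N}=\{1,2,\dots\}$, $\mathbb{R}_+=[0,\infty)$. Conventions: $0\cdot\infty=0$, $1/0=\infty$, $0/0=1$. Nonsingular: $\phi^{-1}(\Delta)\in\mathscr{A}$ for $\Delta\in\mathscr{A}$ and $\mu(\phi^{-1}(\Delta))=0$ when $\mu(\Delta)=0$. $\phi^j$ is the $j$-fold composition, $\mathsf{h}_{\phi^j}$ the Radon–Nikodym derivative of $\mu\circ(\phi^j)^{-1}$ w.r.t. $\mu$. For a nonsingular $\psi$ with $\mathsf{h}_\psi<\infty$ a.e., the conditional expectation w.r.t. $\psi^{-1}(\mathscr{A})$ of an $\mathscr{A}$-measurable $f\ge0$ is the a.e. unique $\psi^{-1}(\mathscr{A})$-measurable function $\mathsf{E}^\psi(f)$ with $\int(g\circ\psi)f\,\mathrm{d}\mu=\int(g\circ\psi)\mathsf{E}^\psi(f)\,\mathrm{d}\mu$ for all $\mathscr{A}$-measurable $g\ge0$; $\mathsf{E}=\mathsf{E}^\phi$, $\mathsf{E}_j=\mathsf{E}^{\phi^j}$. $\mathscr{A}$-measurable family of probability measures: each $P(x,\cdot)$ a Borel probability measure on $\mathbb{R}_+$, each $P(\cdot,\sigma)$ $\mathscr{A}$-measurable. *)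

theory Defs
  imports "HOL-Probability.Probability"
begin

text \<open>Division on [0,\<infinity>] with the paper's conventions 1/0 = \<infinity>, 0/0 = 1.\<close>
definition ediv :: "ennreal \<Rightarrow> ennreal \<Rightarrow> ennreal" where
  "ediv a b = (if b = 0 then (if a = 0 then 1 else \<infinity>) else a / b)"

definition nonsingular :: "'a measure \<Rightarrow> ('a \<Rightarrow> 'a) \<Rightarrow> bool" where
  "nonsingular M \<phi> \<longleftrightarrow> \<phi> \<in> M \<rightarrow>\<^sub>M M \<and>
     (\<forall>A\<in>sets M. emeasure M A = 0 \<longrightarrow> emeasure M (\<phi> -` A \<inter> space M) = 0)"

definition hder :: "'a measure \<Rightarrow> ('a \<Rightarrow> 'a) \<Rightarrow> 'a \<Rightarrow> ennreal" where
  "hder M \<psi> = RN_deriv M (distr M M \<psi>)"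

definition is_cond_exp :: "'a measure \<Rightarrow> ('a \<Rightarrow> 'a) \<Rightarrow> ('a \<Rightarrow> ennreal) \<Rightarrow> ('a \<Rightarrow> ennreal) \<Rightarrow> bool" where
  "is_cond_exp M \<psi> f g \<longleftrightarrow> g \<in> borel_measurable (vimage_algebra (space M) \<psi> M) \<and>
     (\<forall>h \<in> borel_measurable M.
        (\<integral>\<^sup>+ x. h (\<psi> x) * f x \<partial>M) = (\<integral>\<^sup>+ x. h (\<psi> x) * g x \<partial>M))"

definition cond_exp :: "'a measure \<Rightarrow> ('a \<Rightarrow> 'a) \<Rightarrow> ('a \<Rightarrow> ennreal) \<Rightarrow> 'a \<Rightarrow> ennreal" where
  "cond_exp M \<psi> f = (SOME g. is_cond_exp M \<psi> f g)"

abbreviation Rplus :: "real measure" where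
  "Rplus \<equiv> restrict_space borel {0..}"

definition meas_prob_family :: "'a measure \<Rightarrow> ('a \<Rightarrow> real measure) \<Rightarrow> bool" where
  "meas_prob_family M P \<longleftrightarrow>
     (\<forall>x\<in>space M. prob_space (P x) \<and> sets (P x) = sets Rplus) \<and>
     (\<forall>\<sigma>\<in>sets Rplus. (\<lambda>x. emeasure (P x) \<sigma>) \<in> borel_measurable M)"

definition Pj :: "('a \<Rightarrow> real measure) \<Rightarrow> nat \<Rightarrow> 'a \<Rightarrow> real measure" where
  "Pj P j x = distr (P x) Rplus (\<lambda>t. t ^ j)"

end

theory Submission
  imports Defs
begin

(* Integrating the hypothesis against test functions g o phi shows that mixing the kernel P
   against the weight g o phi gives t times the mixture of P against g.  Iterating j times:
     int g(phi^j x) * int v dP(x) dmu(x) = int g(y) * int t^j v(t) dP(y) dmu(y).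
   With g an indicator and v = 1 this identifies h_{phi^j} with the j-th moment of P, which
   is positive because the first moment h_phi is, and finite for j <= n because it is at
   most 1 plus the n-th moment.  With v = 1_sigma(t^j) the same identity is the defining
   property of the claimed conditional expectation. *)

lemma measurable_funpow: "f \<in> M \<rightarrow>\<^sub>M M \<Longrightarrow> f ^^ j \<in> M \<rightarrow>\<^sub>M M"
  by (induction j) (auto intro: measurable_comp)

lemma nonsingular_funpow:
  assumes "nonsingular M f"
  shows "nonsingular M (f ^^ j)"
proof (induction j)
  case 0
  show ?case by (simp add: nonsingular_def Int_absorb1 sets.sets_into_space)
next
  case (Suc j)
  have f: "f \<in> M \<rightarrow>\<^sub>M M" and fj: "f ^^ j \<in> M \<rightarrow>\<^sub>M M"
    using assms Suc.IH by (auto simp: nonsingular_def)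
  have "emeasure M ((f ^^ Suc j) -` A \<inter> space M) = 0" if A: "A \<in> sets M" "emeasure M A = 0" for A
  proof -
    have "(f ^^ Suc j) -` A \<inter> space M = (f ^^ j) -` (f -` A \<inter> space M) \<inter> space M"
      using measurable_space[OF fj] by auto
    moreover have "f -` A \<inter> space M \<in> sets M" "emeasure M (f -` A \<inter> space M) = 0"
      using A assms measurable_sets[OF f] by (auto simp: nonsingular_def)
    ultimately show ?thesis using Suc.IH unfolding nonsingular_def by metis
  qed
  then show ?case using measurable_comp[OF fj f] by (simp only: nonsingular_def funpow.simps) blast
qed

lemma density_hder:
  assumes "sigma_finite_measure M" and "nonsingular M \<psi>"
  shows "density M (hder M \<psi>) = distr M M \<psi>"
  unfolding hder_def
proof (rule sigma_finite_measure.density_RN_deriv[OF assms(1)])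
  show "absolutely_continuous M (distr M M \<psi>)"
    using assms(2) by (auto simp: absolutely_continuous_def nonsingular_def null_sets_def emeasure_distr)
qed simp

lemma measurable_ediv[measurable]:
  assumes [measurable]: "f \<in> borel_measurable M" "g \<in> borel_measurable M"
  shows "(\<lambda>x. ediv (f x) (g x)) \<in> borel_measurable M"
  unfolding ediv_def by measurable

lemma mult_ediv_cancel: "0 < b \<Longrightarrow> b < \<infinity> \<Longrightarrow> b * ediv a b = a"
  by (simp add: ediv_def ennreal_times_divide mult.commute ennreal_mult_divide_eq)

lemma sigma_finite_subalgebra_vimage_algebra:
  assumes \<psi>[measurable]: "\<psi> \<in> M \<rightarrow>\<^sub>M M" and sf: "sigma_finite_measure (distr M M \<psi>)"
  shows "sigma_finite_subalgebra M (vimage_algebra (space M) \<psi> M)"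
proof -
  let ?F = "vimage_algebra (space M) \<psi> M"
  have sub: "subalgebra M ?F"
    unfolding subalgebra_def using sets_image_in_sets[OF refl \<psi>] by simp
  obtain A where A: "countable A" "A \<subseteq> sets M" "\<Union>A = space M"
      "\<forall>a\<in>A. emeasure (distr M M \<psi>) a \<noteq> \<infinity>"
    using sigma_finite_measure.sigma_finite_countable[OF sf] by (metis sets_distr space_distr)
  \<comment> \<open>The preimages of a \<sigma>-finite cover of the image measure cover the subalgebra.\<close>
  let ?B = "(\<lambda>a. \<psi> -` a \<inter> space M) ` A"
  have "?B \<subseteq> sets ?F"
    using A(2) by (auto intro: in_vimage_algebra)
  moreover have "\<Union>?B = space M"
    using A(3) measurable_space[OF \<psi>] by blast
  moreover have "emeasure (restr_to_subalg M ?F) b \<noteq> \<infinity>" if "b \<in> ?B" for b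
  proof -
    obtain a where a: "a \<in> A" "b = \<psi> -` a \<inter> space M" using \<open>b \<in> ?B\<close> by blast
    then have "a \<in> sets M" using A(2) by blast
    have "emeasure (restr_to_subalg M ?F) b = emeasure M b"
      using a(1) A(2) by (intro emeasure_restr_to_subalg[OF sub]) (auto simp: a(2) intro: in_vimage_algebra)
    also have "\<dots> = emeasure (distr M M \<psi>) a"
      using \<open>a \<in> sets M\<close> by (simp add: a(2) emeasure_distr)
    finally show ?thesis using a(1) A(4) by simp
  qed
  ultimately have "sigma_finite_measure (restr_to_subalg M ?F)"
    using A(1) by unfold_locales
      (intro exI[of _ ?B], simp add: sets_restr_to_subalg[OF sub] space_restr_to_subalg)
  then show ?thesis using sub by (simp add: sigma_finite_subalgebra_def)
qed

lemma measurable_vimage_algebra_comp: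
  assumes "\<psi> \<in> M \<rightarrow>\<^sub>M M" and "g \<in> borel_measurable M"
  shows "(\<lambda>x. g (\<psi> x)) \<in> borel_measurable (vimage_algebra (space M) \<psi> M)"
  using measurable_compose[OF measurable_vimage_algebra1 assms(2)] measurable_space[OF assms(1)]
  by blast

lemma is_cond_exp_cond_exp:
  assumes "sigma_finite_subalgebra M (vimage_algebra (space M) \<psi> M)"
    and \<psi>: "\<psi> \<in> M \<rightarrow>\<^sub>M M" and f: "f \<in> borel_measurable M"
  shows "is_cond_exp M \<psi> f (cond_exp M \<psi> f)"
proof -
  interpret sigma_finite_subalgebra M "vimage_algebra (space M) \<psi> M" by fact
  have "is_cond_exp M \<psi> f (nn_cond_exp M (vimage_algebra (space M) \<psi> M) f)"
    unfolding is_cond_exp_def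
    using nn_cond_exp_intg[OF measurable_vimage_algebra_comp[OF \<psi>] f] by auto
  then show ?thesis unfolding cond_exp_def by (rule someI[of "is_cond_exp M \<psi> f"])
qed

lemma AE_cond_exp_eq:
  assumes sfs: "sigma_finite_subalgebra M (vimage_algebra (space M) \<psi> M)"
    and \<psi>: "\<psi> \<in> M \<rightarrow>\<^sub>M M" and f: "f \<in> borel_measurable M"
    and "is_cond_exp M \<psi> f g"
  shows "AE x in M. cond_exp M \<psi> f x = g x"
proof -
  interpret sigma_finite_subalgebra M "vimage_algebra (space M) \<psi> M" by (rule sfs)
  have nn: "AE x in M. g x = nn_cond_exp M (vimage_algebra (space M) \<psi> M) f x"
    if g: "is_cond_exp M \<psi> f g" for g
  proof (rule nn_cond_exp_charact[OF _ f])
    show "g \<in> borel_measurable (vimage_algebra (space M) \<psi> M)"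
      using g by (simp add: is_cond_exp_def)
    fix A assume "A \<in> sets (vimage_algebra (space M) \<psi> M)"
    then obtain B where B: "B \<in> sets M" "A = \<psi> -` B \<inter> space M"
      using sets_vimage_algebra2[of \<psi> "space M" M] measurable_space[OF \<psi>] by auto
    then have "\<And>u. (\<integral>\<^sup>+ x \<in> A. u x \<partial>M) = (\<integral>\<^sup>+ x. indicator B (\<psi> x) * u x \<partial>M)"
      by (intro nn_integral_cong) (auto simp: indicator_def)
    then show "(\<integral>\<^sup>+ x \<in> A. f x \<partial>M) = (\<integral>\<^sup>+ x \<in> A. g x \<partial>M)"
      using g B by (simp add: is_cond_exp_def)
  qed
  show ?thesis
    using nn[OF assms(4)] nn[OF is_cond_exp_cond_exp[OF sfs \<psi> f]] by auto
qed

lemma nn_integral_comp_mult_ediv: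
  assumes dens: "density M k = distr M M \<psi>" and k_pos: "AE y in M. 0 < k y \<and> k y < \<infinity>"
    and [measurable]: "\<psi> \<in> M \<rightarrow>\<^sub>M M" "k \<in> borel_measurable M"
      "g \<in> borel_measurable M" "I \<in> borel_measurable M"
  shows "(\<integral>\<^sup>+x. g (\<psi> x) * ediv (I (\<psi> x)) (k (\<psi> x)) \<partial>M) = (\<integral>\<^sup>+y. g y * I y \<partial>M)"
proof -
  have "(\<integral>\<^sup>+x. g (\<psi> x) * ediv (I (\<psi> x)) (k (\<psi> x)) \<partial>M)
      = (\<integral>\<^sup>+y. g y * ediv (I y) (k y) \<partial>distr M M \<psi>)"
    by (rule nn_integral_distr[symmetric]) auto
  also have "\<dots> = (\<integral>\<^sup>+y. k y * (g y * ediv (I y) (k y)) \<partial>M)"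
    unfolding dens[symmetric] by (rule nn_integral_density) auto
  also have "\<dots> = (\<integral>\<^sup>+y. g y * I y \<partial>M)"
    using k_pos by (intro nn_integral_cong_AE) (auto simp: mult.left_commute[of "k _"] mult_ediv_cancel)
  finally show ?thesis .
qed

lemma AE_cond_exp_eq_ediv_iff:
  assumes sf: "sigma_finite_measure M" and ns: "nonsingular M \<psi>"
    and h_pos: "AE x in M. 0 < hder M \<psi> x \<and> hder M \<psi> x < \<infinity>"
    and [measurable]: "f \<in> borel_measurable M" "I \<in> borel_measurable M"
  shows "(AE x in M. cond_exp M \<psi> f x = ediv (I (\<psi> x)) (hder M \<psi> (\<psi> x))) \<longleftrightarrow>
    (\<forall>g\<in>borel_measurable M. (\<integral>\<^sup>+x. g (\<psi> x) * f x \<partial>M) = (\<integral>\<^sup>+y. g y * I y \<partial>M))"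
    (is "(AE x in M. _ = ?E x) \<longleftrightarrow> _")
proof -
  have \<psi>[measurable]: "\<psi> \<in> M \<rightarrow>\<^sub>M M" using ns by (simp add: nonsingular_def)
  have h[measurable]: "hder M \<psi> \<in> borel_measurable M" by (simp add: hder_def)
  have dens: "density M (hder M \<psi>) = distr M M \<psi>" by (rule density_hder[OF sf ns])
  have "sigma_finite_measure (distr M M \<psi>)"
    using sigma_finite_measure.sigma_finite_iff_density_finite[OF sf h] h_pos dens by auto
  then have sfs: "sigma_finite_subalgebra M (vimage_algebra (space M) \<psi> M)"
    by (rule sigma_finite_subalgebra_vimage_algebra[OF \<psi>])
  have E: "(\<integral>\<^sup>+x. g (\<psi> x) * ?E x \<partial>M) = (\<integral>\<^sup>+y. g y * I y \<partial>M)" if "g \<in> borel_measurable M" for g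
    using that by (intro nn_integral_comp_mult_ediv[OF dens h_pos]) auto
  show ?thesis
  proof
    assume ae: "AE x in M. cond_exp M \<psi> f x = ?E x"
    show "\<forall>g\<in>borel_measurable M. (\<integral>\<^sup>+x. g (\<psi> x) * f x \<partial>M) = (\<integral>\<^sup>+y. g y * I y \<partial>M)"
    proof
      fix g :: "'a \<Rightarrow> ennreal" assume g: "g \<in> borel_measurable M"
      have "(\<integral>\<^sup>+x. g (\<psi> x) * f x \<partial>M) = (\<integral>\<^sup>+x. g (\<psi> x) * cond_exp M \<psi> f x \<partial>M)"
        using is_cond_exp_cond_exp[OF sfs \<psi>] g by (simp add: is_cond_exp_def)
      also have "\<dots> = (\<integral>\<^sup>+x. g (\<psi> x) * ?E x \<partial>M)"
        using ae by (intro nn_integral_cong_AE) auto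
      finally show "(\<integral>\<^sup>+x. g (\<psi> x) * f x \<partial>M) = (\<integral>\<^sup>+y. g y * I y \<partial>M)"
        using E[OF g] by simp
    qed
  next
    assume "\<forall>g\<in>borel_measurable M. (\<integral>\<^sup>+x. g (\<psi> x) * f x \<partial>M) = (\<integral>\<^sup>+y. g y * I y \<partial>M)"
    then have "is_cond_exp M \<psi> f ?E"
      using E measurable_vimage_algebra_comp[OF \<psi>, of "\<lambda>y. ediv (I y) (hder M \<psi> y)"]
      by (simp add: is_cond_exp_def)
    then show "AE x in M. cond_exp M \<psi> f x = ?E x"
      by (rule AE_cond_exp_eq[OF sfs \<psi>, rotated]) simp
  qed
qed

lemma measurable_ident_Rplus[measurable]: "(\<lambda>t::real. t) \<in> borel_measurable Rplus"
  by (rule measurable_restrict_space1) simp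

lemma measurable_power_Rplus[measurable]: "(\<lambda>t::real. t ^ j) \<in> Rplus \<rightarrow>\<^sub>M Rplus"
  by (rule measurable_restrict_space3) auto

definition moment :: "real measure \<Rightarrow> nat \<Rightarrow> ennreal" where
  "moment Q i = (\<integral>\<^sup>+t. ennreal (t ^ i) \<partial>Q)"

lemma moment_eq_0_iff:
  assumes Q: "sets Q = sets Rplus" and i: "1 \<le> i"
  shows "moment Q i = 0 \<longleftrightarrow> (AE t in Q. t = 0)"
proof -
  have space: "space Q = {0..}" using sets_eq_imp_space_eq[OF Q] by simp
  have "(AE t in Q. ennreal (t ^ i) = 0) \<longleftrightarrow> (AE t in Q. t = 0)"
  proof (intro AE_cong)
    fix t assume "t \<in> space Q"
    then have "0 \<le> t ^ i" using space by simp
    then show "ennreal (t ^ i) = 0 \<longleftrightarrow> t = 0"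
      using i by (auto simp: ennreal_eq_0_iff)
  qed
  moreover have "(\<lambda>t. ennreal (t ^ i)) \<in> borel_measurable Q"
    unfolding measurable_cong_sets[OF Q refl] by measurable
  ultimately show ?thesis
    unfolding moment_def by (simp add: nn_integral_0_iff_AE)
qed

lemma moment_le_one_plus:
  assumes "prob_space Q" and Q: "sets Q = sets Rplus" and "i \<le> n"
  shows "moment Q i \<le> 1 + moment Q n"
proof -
  have space: "space Q = {0..}" using sets_eq_imp_space_eq[OF Q] by simp
  have "ennreal (t ^ i) \<le> 1 + ennreal (t ^ n)" if "0 \<le> (t::real)" for t
  proof -
    have "t ^ i \<le> 1 + t ^ n"
    proof (cases "t \<le> 1")
      case True
      then show ?thesis using that by (simp add: power_le_one add_increasing2)
    next
      case False
      then show ?thesis using \<open>i \<le> n\<close> by (simp add: add_increasing power_increasing)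
    qed
    then have "ennreal (t ^ i) \<le> ennreal (1 + t ^ n)" by (rule ennreal_leI)
    also have "\<dots> = 1 + ennreal (t ^ n)" using that by (simp add: ennreal_plus)
    finally show ?thesis .
  qed
  then have "moment Q i \<le> (\<integral>\<^sup>+t. 1 + ennreal (t ^ n) \<partial>Q)"
    unfolding moment_def using space
    by (intro nn_integral_mono) auto
  also have "\<dots> = 1 + moment Q n"
    unfolding moment_def using prob_space.emeasure_space_1[OF assms(1)]
    by (subst nn_integral_add) (auto simp: measurable_cong_sets[OF Q refl])
  finally show ?thesis .
qed

locale cond_exp_kernel =
  fixes M :: "'a measure" and \<phi> :: "'a \<Rightarrow> 'a" and P :: "'a \<Rightarrow> real measure"
  assumes sigma_finite: "sigma_finite_measure M"
    and nonsingular: "nonsingular M \<phi>"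
    and hder_pos_finite: "AE x in M. 0 < hder M \<phi> x \<and> hder M \<phi> x < \<infinity>"
    and prob_family: "meas_prob_family M P"
    and cond_exp_P: "\<forall>\<sigma>\<in>sets Rplus. AE x in M. cond_exp M \<phi> (\<lambda>y. emeasure (P y) \<sigma>) x
      = ediv (\<integral>\<^sup>+ t\<in>\<sigma>. ennreal t \<partial>P (\<phi> x)) (hder M \<phi> (\<phi> x))"
begin

lemma measurable_phi[measurable]: "\<phi> \<in> M \<rightarrow>\<^sub>M M"
  using nonsingular by (simp add: nonsingular_def)

lemma sets_P: "x \<in> space M \<Longrightarrow> sets (P x) = sets Rplus"
  using prob_family by (simp add: meas_prob_family_def)

lemma prob_space_P: "x \<in> space M \<Longrightarrow> prob_space (P x)"
  using prob_family by (simp add: meas_prob_family_def)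

lemma measurable_P[measurable]: "P \<in> M \<rightarrow>\<^sub>M subprob_algebra Rplus"
  using prob_family
  by (intro measurable_subprob_algebra) (auto simp: meas_prob_family_def prob_space_imp_subprob_space)

lemma nn_integral_comp_phi_emeasure:
  assumes [measurable]: "g \<in> borel_measurable M" "\<sigma> \<in> sets Rplus"
  shows "(\<integral>\<^sup>+x. g (\<phi> x) * emeasure (P x) \<sigma> \<partial>M) = (\<integral>\<^sup>+y. g y * (\<integral>\<^sup>+t\<in>\<sigma>. ennreal t \<partial>P y) \<partial>M)"
  using cond_exp_P AE_cond_exp_eq_ediv_iff[OF sigma_finite nonsingular hder_pos_finite,
      of "\<lambda>y. emeasure (P y) \<sigma>" "\<lambda>y. \<integral>\<^sup>+t\<in>\<sigma>. ennreal t \<partial>P y"]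
  by simp

lemma nn_integral_comp_phi_kernel:
  assumes [measurable]: "g \<in> borel_measurable M" "v \<in> borel_measurable Rplus"
  shows "(\<integral>\<^sup>+x. g (\<phi> x) * (\<integral>\<^sup>+t. v t \<partial>P x) \<partial>M) = (\<integral>\<^sup>+y. g y * (\<integral>\<^sup>+t. ennreal t * v t \<partial>P y) \<partial>M)"
proof (cases "space M = {}")
  case True then show ?thesis by (simp add: nn_integral_empty)
next
  case False
  \<comment> \<open>Mixing P against the weights g \<circ> \<phi> and g gives two measures on R_+; the previous lemma
    says that the first one has density t with respect to the second.\<close>
  define Q1 where "Q1 = density M (\<lambda>x. g (\<phi> x)) \<bind> P"
  define Q2 where "Q2 = density M g \<bind> P"
  have sets_Q1: "sets Q1 = sets Rplus"
    unfolding Q1_def using False by (subst sets_bind[where N=Rplus]) (auto simp: sets_P)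
  have sets_Q2: "sets Q2 = sets Rplus"
    unfolding Q2_def using False by (subst sets_bind[where N=Rplus]) (auto simp: sets_P)
  have Q1_eq: "Q1 = density Q2 (\<lambda>t. ennreal t)"
  proof (rule measure_eqI)
    show "sets Q1 = sets (density Q2 (\<lambda>t. ennreal t))" using sets_Q1 sets_Q2 by simp
    fix \<sigma> assume "\<sigma> \<in> sets Q1"
    then have [measurable]: "\<sigma> \<in> sets Rplus" using sets_Q1 by simp
    have "emeasure Q1 \<sigma> = (\<integral>\<^sup>+x. emeasure (P x) \<sigma> \<partial>density M (\<lambda>x. g (\<phi> x)))"
      unfolding Q1_def using False by (intro emeasure_bind[where N=Rplus]) auto
    also have "\<dots> = (\<integral>\<^sup>+x. g (\<phi> x) * emeasure (P x) \<sigma> \<partial>M)"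
      by (intro nn_integral_density) auto
    also have "\<dots> = (\<integral>\<^sup>+y. g y * (\<integral>\<^sup>+t\<in>\<sigma>. ennreal t \<partial>P y) \<partial>M)"
      by (rule nn_integral_comp_phi_emeasure) auto
    also have "\<dots> = (\<integral>\<^sup>+y. (\<integral>\<^sup>+t\<in>\<sigma>. ennreal t \<partial>P y) \<partial>density M g)"
      by (rule nn_integral_density[symmetric]) auto
    also have "\<dots> = (\<integral>\<^sup>+t\<in>\<sigma>. ennreal t \<partial>Q2)"
      unfolding Q2_def by (rule nn_integral_bind[where B=Rplus, symmetric]) auto
    also have "\<dots> = emeasure (density Q2 (\<lambda>t. ennreal t)) \<sigma>"
      using sets_Q2 by (subst emeasure_density) (auto simp: measurable_cong_sets[OF sets_Q2 refl])
    finally show "emeasure Q1 \<sigma> = emeasure (density Q2 (\<lambda>t. ennreal t)) \<sigma>" .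
  qed
  have "(\<integral>\<^sup>+x. g (\<phi> x) * (\<integral>\<^sup>+t. v t \<partial>P x) \<partial>M) = (\<integral>\<^sup>+x. (\<integral>\<^sup>+t. v t \<partial>P x) \<partial>density M (\<lambda>x. g (\<phi> x)))"
    by (rule nn_integral_density[symmetric]) auto
  also have "\<dots> = (\<integral>\<^sup>+t. v t \<partial>Q1)"
    unfolding Q1_def by (rule nn_integral_bind[where B=Rplus, symmetric]) auto
  also have "\<dots> = (\<integral>\<^sup>+t. ennreal t * v t \<partial>Q2)"
    unfolding Q1_eq using sets_Q2 by (subst nn_integral_density) (auto simp: measurable_cong_sets[OF sets_Q2 refl])
  also have "\<dots> = (\<integral>\<^sup>+y. (\<integral>\<^sup>+t. ennreal t * v t \<partial>P y) \<partial>density M g)"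
    unfolding Q2_def by (rule nn_integral_bind[where B=Rplus]) auto
  also have "\<dots> = (\<integral>\<^sup>+y. g y * (\<integral>\<^sup>+t. ennreal t * v t \<partial>P y) \<partial>M)"
    by (rule nn_integral_density) auto
  finally show ?thesis .
qed

lemma nn_integral_comp_funpow_kernel:
  assumes "g \<in> borel_measurable M" and "v \<in> borel_measurable Rplus"
  shows "(\<integral>\<^sup>+x. g ((\<phi> ^^ j) x) * (\<integral>\<^sup>+t. v t \<partial>P x) \<partial>M)
    = (\<integral>\<^sup>+y. g y * (\<integral>\<^sup>+t. ennreal (t ^ j) * v t \<partial>P y) \<partial>M)"
  using assms
proof (induction j arbitrary: g v)
  case 0
  then show ?case by simp
next
  case (Suc j)
  note [measurable] = Suc.prems
  have "(\<integral>\<^sup>+x. g ((\<phi> ^^ Suc j) x) * (\<integral>\<^sup>+t. v t \<partial>P x) \<partial>M)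
      = (\<integral>\<^sup>+y. g (\<phi> y) * (\<integral>\<^sup>+t. ennreal (t ^ j) * v t \<partial>P y) \<partial>M)"
    using Suc.IH[of "\<lambda>y. g (\<phi> y)" v] by simp
  also have "\<dots> = (\<integral>\<^sup>+y. g y * (\<integral>\<^sup>+t. ennreal t * (ennreal (t ^ j) * v t) \<partial>P y) \<partial>M)"
    by (rule nn_integral_comp_phi_kernel) auto
  also have "\<dots> = (\<integral>\<^sup>+y. g y * (\<integral>\<^sup>+t. ennreal (t ^ Suc j) * v t \<partial>P y) \<partial>M)"
  proof (rule nn_integral_cong)
    fix y assume "y \<in> space M"
    then have "space (P y) = {0..}" using sets_eq_imp_space_eq[OF sets_P] by simp
    then have "(\<integral>\<^sup>+t. ennreal t * (ennreal (t ^ j) * v t) \<partial>P y) = (\<integral>\<^sup>+t. ennreal (t ^ Suc j) * v t \<partial>P y)"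
      by (intro nn_integral_cong) (auto simp: ennreal_mult' mult.assoc)
    then show "g y * (\<integral>\<^sup>+t. ennreal t * (ennreal (t ^ j) * v t) \<partial>P y)
        = g y * (\<integral>\<^sup>+t. ennreal (t ^ Suc j) * v t \<partial>P y)" by simp
  qed
  finally show ?case .
qed

lemma measurable_moment_P[measurable]: "(\<lambda>y. moment (P y) i) \<in> borel_measurable M"
  unfolding moment_def by measurable

lemma density_moment: "density M (\<lambda>y. moment (P y) i) = distr M M (\<phi> ^^ i)"
proof (rule measure_eqI)
  show "sets (density M (\<lambda>y. moment (P y) i)) = sets (distr M M (\<phi> ^^ i))" by simp
  fix B assume "B \<in> sets (density M (\<lambda>y. moment (P y) i))"
  then have [measurable]: "B \<in> sets M" by simp
  have [measurable]: "\<phi> ^^ i \<in> M \<rightarrow>\<^sub>M M" by (rule measurable_funpow[OF measurable_phi])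
  have "emeasure (density M (\<lambda>y. moment (P y) i)) B
      = (\<integral>\<^sup>+y. indicator B y * (\<integral>\<^sup>+t. ennreal (t ^ i) * 1 \<partial>P y) \<partial>M)"
    by (subst emeasure_density) (auto simp: moment_def mult.commute)
  also have "\<dots> = (\<integral>\<^sup>+x. indicator B ((\<phi> ^^ i) x) * (\<integral>\<^sup>+t. 1 \<partial>P x) \<partial>M)"
    by (rule nn_integral_comp_funpow_kernel[symmetric]) auto
  also have "\<dots> = (\<integral>\<^sup>+x. indicator ((\<phi> ^^ i) -` B \<inter> space M) x \<partial>M)"
    by (intro nn_integral_cong) (simp add: indicator_def prob_space.emeasure_space_1[OF prob_space_P])
  also have "\<dots> = emeasure (distr M M (\<phi> ^^ i)) B"
    by (subst emeasure_distr) auto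
  finally show "emeasure (density M (\<lambda>y. moment (P y) i)) B = emeasure (distr M M (\<phi> ^^ i)) B" .
qed

lemma AE_hder_funpow_eq_moment: "AE y in M. hder M (\<phi> ^^ i) y = moment (P y) i"
  unfolding hder_def
  using sigma_finite_measure.RN_deriv_unique[OF sigma_finite measurable_moment_P density_moment]
  by (simp add: eq_commute)

lemma AE_hder_funpow_pos_finite:
  assumes "1 \<le> j" "j \<le> n" and n_finite: "AE x in M. hder M (\<phi> ^^ n) x < \<infinity>"
  shows "AE x in M. 0 < hder M (\<phi> ^^ j) x \<and> hder M (\<phi> ^^ j) x < \<infinity>"
  using AE_hder_funpow_eq_moment[of 1] AE_hder_funpow_eq_moment[of j] AE_hder_funpow_eq_moment[of n]
    hder_pos_finite n_finite AE_space
proof eventually_elim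
  case (elim y)
  have "moment (P y) j \<noteq> 0"
    using elim moment_eq_0_iff[OF sets_P, of y 1] moment_eq_0_iff[OF sets_P, of y j] \<open>1 \<le> j\<close> by auto
  moreover have "moment (P y) j \<le> 1 + moment (P y) n"
    using elim by (intro moment_le_one_plus prob_space_P sets_P \<open>j \<le> n\<close>)
  ultimately show ?case
    using elim by (auto simp: ennreal_add_less_top zero_less_iff_neq_zero intro: le_less_trans)
qed

lemma measurable_Pj[measurable]: "Pj P j \<in> M \<rightarrow>\<^sub>M subprob_algebra Rplus"
  unfolding Pj_def by (rule measurable_compose[OF measurable_P measurable_distr[OF measurable_power_Rplus]])

lemma nn_integral_Pj:
  assumes "y \<in> space M" and [measurable]: "v \<in> borel_measurable Rplus"
  shows "(\<integral>\<^sup>+t. v t \<partial>Pj P j y) = (\<integral>\<^sup>+t. v (t ^ j) \<partial>P y)"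
proof -
  have "(\<lambda>t::real. t ^ j) \<in> P y \<rightarrow>\<^sub>M Rplus"
    unfolding measurable_cong_sets[OF sets_P[OF assms(1)] refl] by (rule measurable_power_Rplus)
  then show ?thesis
    unfolding Pj_def by (rule nn_integral_distr) simp
qed

lemma AE_cond_exp_Pj:
  assumes h_pos: "AE x in M. 0 < hder M (\<phi> ^^ j) x \<and> hder M (\<phi> ^^ j) x < \<infinity>"
    and [measurable]: "\<sigma> \<in> sets Rplus"
  shows "AE x in M. cond_exp M (\<phi> ^^ j) (\<lambda>y. emeasure (Pj P j y) \<sigma>) x
    = ediv (\<integral>\<^sup>+ t\<in>\<sigma>. ennreal t \<partial>Pj P j ((\<phi> ^^ j) x)) (hder M (\<phi> ^^ j) ((\<phi> ^^ j) x))"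
proof (subst AE_cond_exp_eq_ediv_iff[OF sigma_finite nonsingular_funpow[OF nonsingular] h_pos],
    (measurable; fail)+, intro ballI)
  fix g :: "'a \<Rightarrow> ennreal" assume [measurable]: "g \<in> borel_measurable M"
  have emeasure_Pj: "emeasure (Pj P j x) \<sigma> = (\<integral>\<^sup>+t. indicator \<sigma> (t ^ j) \<partial>P x)"
    if "x \<in> space M" for x
  proof -
    have "emeasure (Pj P j x) \<sigma> = (\<integral>\<^sup>+t. indicator \<sigma> t \<partial>Pj P j x)"
      by (simp add: Pj_def)
    also have "\<dots> = (\<integral>\<^sup>+t. indicator \<sigma> (t ^ j) \<partial>P x)"
      using that by (rule nn_integral_Pj) simp
    finally show ?thesis .
  qed
  have "(\<integral>\<^sup>+x. g ((\<phi> ^^ j) x) * emeasure (Pj P j x) \<sigma> \<partial>M)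
      = (\<integral>\<^sup>+x. g ((\<phi> ^^ j) x) * (\<integral>\<^sup>+t. indicator \<sigma> (t ^ j) \<partial>P x) \<partial>M)"
    by (intro nn_integral_cong) (simp add: emeasure_Pj)
  also have "\<dots> = (\<integral>\<^sup>+y. g y * (\<integral>\<^sup>+t. ennreal (t ^ j) * indicator \<sigma> (t ^ j) \<partial>P y) \<partial>M)"
    by (rule nn_integral_comp_funpow_kernel) measurable
  also have "\<dots> = (\<integral>\<^sup>+y. g y * (\<integral>\<^sup>+t\<in>\<sigma>. ennreal t \<partial>Pj P j y) \<partial>M)"
    by (intro nn_integral_cong) (simp add: nn_integral_Pj)
  finally show "(\<integral>\<^sup>+x. g ((\<phi> ^^ j) x) * emeasure (Pj P j x) \<sigma> \<partial>M)
      = (\<integral>\<^sup>+y. g y * (\<integral>\<^sup>+t\<in>\<sigma>. ennreal t \<partial>Pj P j y) \<partial>M)" .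
qed


end

theorem proposition23:
  fixes M :: "'a measure" and \<phi> :: "'a \<Rightarrow> 'a" and P :: "'a \<Rightarrow> real measure" and n :: nat
  assumes "sigma_finite_measure M"
    and "nonsingular M \<phi>"
    and "AE x in M. 0 < hder M \<phi> x \<and> hder M \<phi> x < \<infinity>"
    and "meas_prob_family M P"
    and "\<forall>\<sigma>\<in>sets Rplus. AE x in M.
           cond_exp M \<phi> (\<lambda>y. emeasure (P y) \<sigma>) x
             = ediv (\<integral>\<^sup>+ t\<in>\<sigma>. ennreal t \<partial>P (\<phi> x)) (hder M \<phi> (\<phi> x))"
    and "n \<ge> 1"
    and "AE x in M. hder M (\<phi> ^^ n) x < \<infinity>"
  shows "\<forall>j\<in>{1..n}.
           (AE x in M. 0 < hder M (\<phi> ^^ j) x \<and> hder M (\<phi> ^^ j) x < \<infinity>) \<and>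
           (\<forall>\<sigma>\<in>sets Rplus. AE x in M.
              cond_exp M (\<phi> ^^ j) (\<lambda>y. emeasure (Pj P j y) \<sigma>) x
                = ediv (\<integral>\<^sup>+ t\<in>\<sigma>. ennreal t \<partial>Pj P j ((\<phi> ^^ j) x)) (hder M (\<phi> ^^ j) ((\<phi> ^^ j) x)))"
proof
  interpret cond_exp_kernel M \<phi> P by (rule cond_exp_kernel.intro[OF assms(1-5)])
  fix j assume "j \<in> {1..n}"
  then have h_pos: "AE x in M. 0 < hder M (\<phi> ^^ j) x \<and> hder M (\<phi> ^^ j) x < \<infinity>"
    by (intro AE_hder_funpow_pos_finite[OF _ _ assms(7)]) auto
  then show "(AE x in M. 0 < hder M (\<phi> ^^ j) x \<and> hder M (\<phi> ^^ j) x < \<infinity>) \<and>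
      (\<forall>\<sigma>\<in>sets Rplus. AE x in M.
        cond_exp M (\<phi> ^^ j) (\<lambda>y. emeasure (Pj P j y) \<sigma>) x
          = ediv (\<integral>\<^sup>+ t\<in>\<sigma>. ennreal t \<partial>Pj P j ((\<phi> ^^ j) x)) (hder M (\<phi> ^^ j) ((\<phi> ^^ j) x)))"
    using AE_cond_exp_Pj by blast
qed

end
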